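(* Let $d\ge2$, $n\ge1$, and $\gamma$ a positive conductivity on the lattice graph below. Then $T_2^{(t)}$ is injective for every $t$ with $d-1\le t\le dn-1$, and $T_2'^{(t)}$ is injective for every $t$ with $d\le t\le dn$.
   Context: Lattice: $D=\{x\in\mathbb Z^d:1\le x_i\le n\ \forall i\}$, $\partial D=\{p\in\mathbb Z^d:\min_{q\in D}\|q-p\|_{\ell^1}=1\}$; $E$ = unordered pairs $pq\subseteq D\cup\partial D$ with $\|p-q\|_{\ell^1}=1$, not both in $\partial D$; $\mathcal N(p)=\{q:pq\in E\}$; each $b\in\partial D$ has a unique neighbour $q_b\in D$. Conductivity $\gamma:E\to(0,\infty)$, symmetric. With $s(x)=\sum_ix_i$: $L_t=\{x\in D:s(x)=t\}$, $L_t^{\mathcal S}=\{x\in D:s(x)\le t\}$, $K_t^+=\{x\in\partial D:s(x)=t,\max_ix_i=n+1\}$, $K_t^-=\{x\in\partial D:s(x)=t,\min_ix_i=0\}$, $K_t^{\mathcal S\pm}=\bigcup_{\ell\le t}K_\ell^\pm$, $J_t^{\mathcal S}=K_t^{\mathcal S-}\cup K_{t+1}^{\mathcal S+}$. $T_2^{(t)}:\mathbb R^{L_{t+1}}\to\mathbb R^{\partial D\setminus J_t^{\mathcal S}}$: for $\mathbf y$, let $\mathbf w$ be the unique function on $(D\setminus L_t^{\mathcal S})\cup(\partial D\setminus J_t^{\mathcal S})$ with $\mathbf w=\mathbf y$ on $L_{t+1}$, $\mathbf w=0$ on $\partial D\setminus J_t^{\mathcal S}$, $\sum_{q\in\mathcal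 N(p)}\gamma_{pq}(\mathbf w_q-\mathbf w_p)=0$ for $p\in D\setminus L_{t+1}^{\mathcal S}$; $(T_2^{(t)}\mathbf y)_b=\gamma_{bq_b}(\mathbf w_{q_b}-\mathbf w_b)$. $T_2'^{(t)}:\mathbb R^{L_t}\to\mathbb R^{J_{t-1}^{\mathcal S}}$: for $\mathbf x$, let $\mathbf u$ be the unique function on $L_t^{\mathcal S}\cup J_{t-1}^{\mathcal S}$ with $\mathbf u=\mathbf x$ on $L_t$, $\mathbf u=0$ on $J_{t-1}^{\mathcal S}$, $\sum_{q\in\mathcal N(p)}\gamma_{pq}(\mathbf u_q-\mathbf u_p)=0$ for $p\in L_{t-1}^{\mathcal S}$; $(T_2'^{(t)}\mathbf x)_b=\gamma_{bq_b}(\mathbf u_{q_b}-\mathbf u_b)$. *)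

theory Defs
  imports Complex_Main
begin

text \<open>Points of Z^d are represented as integer lists of length d
  (coordinate i is x ! i, for i < d).\<close>

definition l1dist :: "int list \<Rightarrow> int list \<Rightarrow> int" where
  "l1dist p q = (\<Sum>i<length p. \<bar>p ! i - q ! i\<bar>)"

definition Dom :: "nat \<Rightarrow> nat \<Rightarrow> int list set" where
  "Dom d n = {x. length x = d \<and> (\<forall>i<d. 1 \<le> x ! i \<and> x ! i \<le> int n)}"

definition Bd :: "nat \<Rightarrow> nat \<Rightarrow> int list set" where
  "Bd d n = {p. length p = d \<and> Min ((\<lambda>q. l1dist q p) ` Dom d n) = 1}"

definition Edge :: "nat \<Rightarrow> nat \<Rightarrow> int list \<Rightarrow> int list \<Rightarrow> bool" where
  "Edge d n p q \<longleftrightarrow> p \<in> Dom d n \<union> Bd d n \<and> q \<in> Dom d n \<union> Bd d n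
     \<and> l1dist p q = 1 \<and> \<not> (p \<in> Bd d n \<and> q \<in> Bd d n)"

definition Nbr :: "nat \<Rightarrow> nat \<Rightarrow> int list \<Rightarrow> int list set" where
  "Nbr d n p = {q. Edge d n p q}"

definition qb :: "nat \<Rightarrow> nat \<Rightarrow> int list \<Rightarrow> int list" where
  "qb d n b = (THE q. q \<in> Dom d n \<and> l1dist q b = 1)"

definition conductivity :: "nat \<Rightarrow> nat \<Rightarrow> (int list \<Rightarrow> int list \<Rightarrow> real) \<Rightarrow> bool" where
  "conductivity d n \<gamma> \<longleftrightarrow>
     (\<forall>p q. Edge d n p q \<longrightarrow> \<gamma> p q > 0 \<and> \<gamma> p q = \<gamma> q p)"

definition ssum :: "int list \<Rightarrow> int" where
  "ssum x = sum_list x"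

definition Lev :: "nat \<Rightarrow> nat \<Rightarrow> int \<Rightarrow> int list set" where
  "Lev d n t = {x \<in> Dom d n. ssum x = t}"

definition LevS :: "nat \<Rightarrow> nat \<Rightarrow> int \<Rightarrow> int list set" where
  "LevS d n t = {x \<in> Dom d n. ssum x \<le> t}"

definition Kplus :: "nat \<Rightarrow> nat \<Rightarrow> int \<Rightarrow> int list set" where
  "Kplus d n t = {x \<in> Bd d n. ssum x = t \<and> Max (set x) = int n + 1}"

definition Kminus :: "nat \<Rightarrow> nat \<Rightarrow> int \<Rightarrow> int list set" where
  "Kminus d n t = {x \<in> Bd d n. ssum x = t \<and> Min (set x) = 0}"

definition KSplus :: "nat \<Rightarrow> nat \<Rightarrow> int \<Rightarrow> int list set" where
  "KSplus d n t = (\<Union>l\<in>{l. l \<le> t}. Kplus d n l)"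

definition KSminus :: "nat \<Rightarrow> nat \<Rightarrow> int \<Rightarrow> int list set" where
  "KSminus d n t = (\<Union>l\<in>{l. l \<le> t}. Kminus d n l)"

definition JS :: "nat \<Rightarrow> nat \<Rightarrow> int \<Rightarrow> int list set" where
  "JS d n t = KSminus d n t \<union> KSplus d n (t + 1)"

text \<open>Functions on a finite set A are represented as functions on all points
  vanishing outside A.\<close>

definition T2 :: "nat \<Rightarrow> nat \<Rightarrow> (int list \<Rightarrow> int list \<Rightarrow> real) \<Rightarrow> int
                   \<Rightarrow> (int list \<Rightarrow> real) \<Rightarrow> (int list \<Rightarrow> real)" where
  "T2 d n \<gamma> t y =
    (let w = (THE w. (\<forall>x. x \<notin> (Dom d n - LevS d n t) \<union> (Bd d n - JS d n t) \<longrightarrow> w x = 0)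
                 \<and> (\<forall>x\<in>Lev d n (t + 1). w x = y x)
                 \<and> (\<forall>x\<in>Bd d n - JS d n t. w x = 0)
                 \<and> (\<forall>p\<in>Dom d n - LevS d n (t + 1).
                       (\<Sum>q\<in>Nbr d n p. \<gamma> p q * (w q - w p)) = 0))
     in (\<lambda>b. if b \<in> Bd d n - JS d n t then \<gamma> b (qb d n b) * (w (qb d n b) - w b) else 0))"

definition T2' :: "nat \<Rightarrow> nat \<Rightarrow> (int list \<Rightarrow> int list \<Rightarrow> real) \<Rightarrow> int
                   \<Rightarrow> (int list \<Rightarrow> real) \<Rightarrow> (int list \<Rightarrow> real)" where
  "T2' d n \<gamma> t x =
    (let u = (THE u. (\<forall>z. z \<notin> LevS d n t \<union> JS d n (t - 1) \<longrightarrow> u z = 0)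
                 \<and> (\<forall>z\<in>Lev d n t. u z = x z)
                 \<and> (\<forall>z\<in>JS d n (t - 1). u z = 0)
                 \<and> (\<forall>p\<in>LevS d n (t - 1).
                       (\<Sum>q\<in>Nbr d n p. \<gamma> p q * (u q - u p)) = 0))
     in (\<lambda>b. if b \<in> JS d n (t - 1) then \<gamma> b (qb d n b) * (u (qb d n b) - u b) else 0))"

end

theory Submission
  imports Defs "HOL-Library.Function_Algebras"
begin

text \<open>
  T2 and T2' map Dirichlet data on a level set of s(x) = x_1 + ... + x_d to the Neumann data of
  its harmonic extension, so their injectivity is a unique continuation property: a function
  that is harmonic above a level, whose Cauchy data vanish on the upper faces of the box and whose
  Dirichlet data vanish on the lower faces, vanishes above that level. Take a point x above the
  level with w x \<noteq> 0 and |x|^2 maximal. If x lies on an upper face, the Cauchy data at the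
  adjacent boundary point force w x = 0. Otherwise raise the largest coordinate of x to get a
  point p: every neighbour of p other than x has larger |.|^2 or lies on a face, so the harmonic
  equation at p forces w x = 0. The downward version follows by the reflection x \<mapsto> (n+1) - x.
  The harmonic extension is well defined because every interior point has a neighbour with larger
  (resp. smaller) s, which gives a maximum principle, and an injective linear endomorphism of a
  finite-dimensional space is surjective.
\<close>

section \<open>Linear algebra on finitely supported functions\<close>

lemma sum_fun_apply: "(\<Sum>i\<in>I. f i) x = (\<Sum>i\<in>I. f i x :: 'b::comm_monoid_add)"
  by (induction I rule: infinite_finite_induct) auto

lemma (in vector_space) linear_inj_on_span_imp_surj_on:
  assumes "finite B" and "Vector_Spaces.linear scale scale f"
    and into: "f ` span B \<subseteq> span B" and inj: "inj_on f (span B)"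
  shows "f ` span B = span B"
proof
  interpret f: Vector_Spaces.linear scale scale f by fact
  obtain C where C: "C \<subseteq> B" "independent C" "B \<subseteq> span C"
    by (rule basis_exists[of B]) (rule that; assumption)
  have C_span: "C \<subseteq> span B"
    by (rule subset_trans[OF C(1) span_superset])
  have span_C: "span C = span B"
    unfolding span_eq using C_span C(3) by (rule conjI)
  have "finite C"
    using C(1) \<open>finite B\<close> by (rule finite_subset)
  have inj_C: "inj_on f C"
    using inj C_span by (rule inj_on_subset)
  have indep: "independent (f ` C)"
    using C(2) inj unfolding span_C[symmetric] by (rule f.independent_injective_image)
  show "span B \<subseteq> f ` span B"
  proof
    fix y assume y: "y \<in> span B"
    show "y \<in> f ` span B"
    proof (rule ccontr)
      assume "y \<notin> f ` span B"
      then have y_out: "y \<notin> span (f ` C)"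
        by (simp add: f.span_image span_C)
      then have indep_y: "independent (insert y (f ` C))"
        using indep by (rule independent_insertI)
      have "f ` C \<subseteq> span B"
        using image_mono[OF C_span] into by (rule subset_trans)
      then have "insert y (f ` C) \<subseteq> span C"
        unfolding span_C using y by (intro insert_subsetI)
      then have "card (insert y (f ` C)) \<le> card C"
        using independent_span_bound[OF \<open>finite C\<close> indep_y] by blast
      moreover have "y \<notin> f ` C"
        using y_out by (meson span_base)
      ultimately show False
        using \<open>finite C\<close> card_image[OF inj_C] by simp
    qed
  qed
qed (fact into)

definition supported_on :: "'a set \<Rightarrow> ('a \<Rightarrow> 'b::zero) set" where
  "supported_on A = {u. \<forall>x. x \<notin> A \<longrightarrow> u x = 0}"

lemma linear_inj_on_supported_on_imp_surj_on:
  fixes A :: "('a \<Rightarrow> 'k::field) \<Rightarrow> 'a \<Rightarrow> 'k"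
  assumes "finite H"
    and add: "\<And>u v. A (u + v) = A u + A v"
    and scale: "\<And>c u. A (\<lambda>x. c * u x) = (\<lambda>x. c * A u x)"
    and into: "A ` supported_on H \<subseteq> supported_on H"
    and inj: "inj_on A (supported_on H)"
  shows "A ` supported_on H = supported_on H"
proof -
  interpret V: vector_space "\<lambda>c (u::'a \<Rightarrow> 'k) x. c * u x"
    by unfold_locales (simp_all add: fun_eq_iff algebra_simps)
  define \<delta> where "\<delta> h = (\<lambda>x. if x = h then 1 else 0 :: 'k)" for h :: 'a
  have span: "V.span (\<delta> ` H) = supported_on H"
  proof
    have "V.subspace (supported_on H)"
      by (auto simp: V.subspace_def supported_on_def)
    then show "V.span (\<delta> ` H) \<subseteq> supported_on H"
      by (rule V.span_minimal[rotated]) (auto simp: \<delta>_def supported_on_def)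
  next
    show "supported_on H \<subseteq> V.span (\<delta> ` H)"
    proof
      fix u :: "'a \<Rightarrow> 'k" assume u: "u \<in> supported_on H"
      have expand: "u x = (\<Sum>h\<in>H. u h * \<delta> h x)" for x
      proof -
        have "(\<Sum>h\<in>H. u h * \<delta> h x) = (\<Sum>h\<in>H. if h = x then u x else 0)"
          by (rule sum.cong) (auto simp: \<delta>_def)
        then show ?thesis
          using u \<open>finite H\<close> by (simp add: supported_on_def)
      qed
      have "u = (\<Sum>h\<in>H. (\<lambda>x. u h * \<delta> h x))"
        unfolding fun_eq_iff sum_fun_apply using expand by blast
      also have "\<dots> \<in> V.span (\<delta> ` H)"
        by (intro V.span_sum V.span_scale V.span_base) auto
      finally show "u \<in> V.span (\<delta> ` H)" .
    qed
  qed
  have "Vector_Spaces.linear (\<lambda>c u x. c * u x) (\<lambda>c u x. c * u x) A"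
    by (simp add: Vector_Spaces.linear_iff V.vector_space_axioms add scale)
  moreover have "finite (\<delta> ` H)"
    using \<open>finite H\<close> by simp
  ultimately show ?thesis
    using V.linear_inj_on_span_imp_surj_on[of "\<delta> ` H" A] into inj unfolding span by simp
qed

section \<open>Harmonic functions on weighted graphs\<close>

lemma finite_obtain_arg_max:
  fixes f :: "'a \<Rightarrow> 'b::linorder"
  assumes "finite S" and "S \<noteq> {}"
  obtains x where "x \<in> S" and "\<And>y. y \<in> S \<Longrightarrow> f y \<le> f x"
proof -
  have "Max (f ` S) \<in> f ` S"
    using assms by simp
  then obtain x where "x \<in> S" and "f x = Max (f ` S)"
    by (metis imageE)
  then show ?thesis
    using that assms by simp
qed

definition laplacian :: "('a \<Rightarrow> 'a set) \<Rightarrow> ('a \<Rightarrow> 'a \<Rightarrow> real) \<Rightarrow> ('a \<Rightarrow> real) \<Rightarrow> 'a \<Rightarrow> real" where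
  "laplacian N g u p = (\<Sum>q\<in>N p. g p q * (u q - u p))"

lemma laplacian_add: "laplacian N g (u + v) p = laplacian N g u p + laplacian N g v p"
  by (simp add: laplacian_def sum.distrib[symmetric] algebra_simps)

lemma laplacian_diff: "laplacian N g (\<lambda>x. u x - v x) p = laplacian N g u p - laplacian N g v p"
  by (simp add: laplacian_def sum_subtractf[symmetric] algebra_simps)

lemma laplacian_scale: "laplacian N g (\<lambda>x. c * u x) p = c * laplacian N g u p"
  by (simp add: laplacian_def sum_distrib_left algebra_simps)

lemma neighbour_eq_if_harmonic_at_local_max:
  assumes "finite (N p)" and pos: "\<And>q. q \<in> N p \<Longrightarrow> 0 < g p q"
    and "laplacian N g u p = 0" and le: "\<And>q. q \<in> N p \<Longrightarrow> u q \<le> u p" and "q \<in> N p"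
  shows "u q = u p"
proof -
  have "(\<Sum>r\<in>N p. g p r * (u p - u r)) = - laplacian N g u p"
    by (simp add: laplacian_def sum_negf[symmetric] algebra_simps)
  moreover have "0 \<le> g p r * (u p - u r)" if "r \<in> N p" for r
    using pos[OF that] le[OF that] by simp
  ultimately have "\<forall>r\<in>N p. g p r * (u p - u r) = 0"
    using sum_nonneg_eq_0_iff[OF \<open>finite (N p)\<close>, of "\<lambda>r. g p r * (u p - u r)"]
      \<open>laplacian N g u p = 0\<close> by simp
  then show ?thesis
    using pos[OF \<open>q \<in> N p\<close>] \<open>q \<in> N p\<close> by auto
qed

lemma laplacian_eq_single_neighbour:
  assumes "finite (N p)" and "x \<in> N p" and "\<And>q. q \<in> N p \<Longrightarrow> q \<noteq> x \<Longrightarrow> u q = 0" and "u p = 0"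
  shows "laplacian N g u p = g p x * u x"
proof -
  have "laplacian N g u p = g p x * (u x - u p) + (\<Sum>q\<in>N p - {x}. g p q * (u q - u p))"
    unfolding laplacian_def using assms(1,2) by (rule sum.remove)
  also have "\<dots> = g p x * u x"
    using assms(3,4) by simp
  finally show ?thesis .
qed

definition is_harmonic_extension ::
    "('a \<Rightarrow> 'a set) \<Rightarrow> ('a \<Rightarrow> 'a \<Rightarrow> real) \<Rightarrow> 'a set \<Rightarrow> 'a set \<Rightarrow> 'a set
     \<Rightarrow> ('a \<Rightarrow> real) \<Rightarrow> ('a \<Rightarrow> real) \<Rightarrow> bool" where
  "is_harmonic_extension N g H Y Z y w \<longleftrightarrow>
     (\<forall>x. x \<notin> H \<union> Y \<union> Z \<longrightarrow> w x = 0) \<and> (\<forall>x\<in>Y. w x = y x) \<and> (\<forall>x\<in>Z. w x = 0)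
     \<and> (\<forall>p\<in>H. laplacian N g w p = 0)"

definition dirichlet_to_neumann ::
    "('a \<Rightarrow> 'a set) \<Rightarrow> ('a \<Rightarrow> 'a \<Rightarrow> real) \<Rightarrow> ('a \<Rightarrow> 'a) \<Rightarrow> 'a set \<Rightarrow> 'a set \<Rightarrow> 'a set
     \<Rightarrow> ('a \<Rightarrow> real) \<Rightarrow> 'a \<Rightarrow> real" where
  "dirichlet_to_neumann N g Q H Y Z y =
     (let w = (THE w. is_harmonic_extension N g H Y Z y w)
      in (\<lambda>b. if b \<in> Z then g b (Q b) * (w (Q b) - w b) else 0))"

text \<open>
  In the maximum principle the escape assumption replaces connectivity to the boundary: a path
  along which f increases strictly must leave the finite set H.
\<close>

locale escaping_network =
  fixes H :: "'a set" and N :: "'a \<Rightarrow> 'a set" and g :: "'a \<Rightarrow> 'a \<Rightarrow> real"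
    and f :: "'a \<Rightarrow> 'b::linorder"
  assumes finite_H: "finite H"
    and finite_N: "p \<in> H \<Longrightarrow> finite (N p)"
    and weight_pos: "p \<in> H \<Longrightarrow> q \<in> N p \<Longrightarrow> 0 < g p q"
    and escape: "p \<in> H \<Longrightarrow> \<exists>q\<in>N p. f p < f q"
begin

lemma harmonic_nonpos:
  assumes u: "u \<in> supported_on H" and harmonic: "\<And>p. p \<in> H \<Longrightarrow> laplacian N g u p = 0"
  shows "u x \<le> 0"
proof (rule ccontr)
  assume "\<not> u x \<le> 0"
  then have "x \<in> H"
    using u by (auto simp: supported_on_def)
  then obtain m where "m \<in> H" and m_max: "\<And>y. y \<in> H \<Longrightarrow> u y \<le> u m"
    using finite_obtain_arg_max[OF finite_H, of u] by blast
  have "0 < u m"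
    using m_max[OF \<open>x \<in> H\<close>] \<open>\<not> u x \<le> 0\<close> by simp
  define S where "S = {y \<in> H. u y = u m}"
  have "finite S" "S \<noteq> {}"
    using finite_H \<open>m \<in> H\<close> by (auto simp: S_def)
  then obtain p where "p \<in> S" and p_max: "\<And>y. y \<in> S \<Longrightarrow> f y \<le> f p"
    using finite_obtain_arg_max[of S f] by blast
  then have "p \<in> H" and "u p = u m"
    by (auto simp: S_def)
  obtain q where "q \<in> N p" and "f p < f q"
    using escape[OF \<open>p \<in> H\<close>] by blast
  have "u r \<le> u p" if "r \<in> N p" for r
  proof (cases "r \<in> H")
    case True
    then show ?thesis
      using m_max \<open>u p = u m\<close> by simp
  next
    case False
    then show ?thesis
      using u \<open>0 < u m\<close> \<open>u p = u m\<close> by (simp add: supported_on_def)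
  qed
  with finite_N[OF \<open>p \<in> H\<close>] weight_pos[OF \<open>p \<in> H\<close>] harmonic[OF \<open>p \<in> H\<close>]
  have "u q = u p"
    using \<open>q \<in> N p\<close> by (rule neighbour_eq_if_harmonic_at_local_max)
  then have "q \<in> S"
    using u \<open>0 < u m\<close> \<open>u p = u m\<close> by (auto simp: S_def supported_on_def)
  then show False
    using p_max[of q] \<open>f p < f q\<close> by simp
qed

lemma harmonic_eq_0:
  assumes u: "u \<in> supported_on H" and harmonic: "\<And>p. p \<in> H \<Longrightarrow> laplacian N g u p = 0"
  shows "u x = 0"
proof -
  have "(\<lambda>x. - u x) \<in> supported_on H"
    using u by (simp add: supported_on_def)
  moreover have "laplacian N g (\<lambda>x. - u x) p = 0" if "p \<in> H" for p
    using harmonic[OF that] laplacian_scale[of N g "- 1" u p] by simp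
  ultimately have "- u x \<le> 0"
    by (rule harmonic_nonpos[of "\<lambda>x. - u x"])
  then show ?thesis
    using harmonic_nonpos[OF u harmonic, of x] by simp
qed

lemma dirichlet_solvable: "\<exists>u\<in>supported_on H. \<forall>p\<in>H. laplacian N g u p = c p"
proof -
  define A where "A u p = (if p \<in> H then laplacian N g u p else 0)" for u p
  have "A ` supported_on H = supported_on H"
  proof (rule linear_inj_on_supported_on_imp_surj_on[OF finite_H])
    show "A (u + v) = A u + A v" for u v
      by (simp add: A_def fun_eq_iff laplacian_add)
    show "A (\<lambda>x. c * u x) = (\<lambda>x. c * A u x)" for c u
      by (simp add: A_def fun_eq_iff laplacian_scale)
    show "A ` supported_on H \<subseteq> supported_on H"
      by (auto simp: A_def supported_on_def)
    show "inj_on A (supported_on H)"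
    proof (rule inj_onI)
      fix u v assume "u \<in> supported_on H" "v \<in> supported_on H" "A u = A v"
      have "(\<lambda>x. u x - v x) \<in> supported_on H"
        using \<open>u \<in> supported_on H\<close> \<open>v \<in> supported_on H\<close> by (simp add: supported_on_def)
      moreover have "laplacian N g (\<lambda>x. u x - v x) p = 0" if "p \<in> H" for p
        using fun_cong[OF \<open>A u = A v\<close>, of p] that by (simp add: A_def laplacian_diff)
      ultimately have "u x - v x = 0" for x
        by (rule harmonic_eq_0)
      then show "u = v"
        by (simp add: fun_eq_iff)
    qed
  qed
  moreover have "(\<lambda>p. if p \<in> H then c p else 0) \<in> supported_on H"
    by (simp add: supported_on_def)
  ultimately have "(\<lambda>p. if p \<in> H then c p else 0) \<in> A ` supported_on H"
    by simp
  then obtain u where "u \<in> supported_on H" and Au: "(\<lambda>p. if p \<in> H then c p else 0) = A u"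
    by blast
  show ?thesis
  proof (intro bexI ballI)
    show "laplacian N g u p = c p" if "p \<in> H" for p
      using fun_cong[OF Au, of p] that by (simp add: A_def)
  qed fact
qed

lemma ex1_harmonic_extension:
  assumes "H \<inter> Y = {}" and "Z \<inter> (H \<union> Y) = {}" and y: "y \<in> supported_on Y"
  shows "\<exists>!w. is_harmonic_extension N g H Y Z y w"
proof (rule ex_ex1I)
  obtain u where u: "u \<in> supported_on H" and lap_u: "\<forall>p\<in>H. laplacian N g u p = - laplacian N g y p"
    using dirichlet_solvable[of "\<lambda>p. - laplacian N g y p"] by blast
  have "is_harmonic_extension N g H Y Z y (u + y)"
    unfolding is_harmonic_extension_def
  proof (intro conjI allI impI ballI)
    show "(u + y) x = 0" if "x \<notin> H \<union> Y \<union> Z" for x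
      using that u y by (simp add: supported_on_def)
    show "(u + y) x = y x" if "x \<in> Y" for x
      using that u \<open>H \<inter> Y = {}\<close> by (auto simp: supported_on_def)
    show "(u + y) x = 0" if "x \<in> Z" for x
      using that u y \<open>Z \<inter> (H \<union> Y) = {}\<close> by (simp add: supported_on_def disjoint_iff)
    show "laplacian N g (u + y) p = 0" if "p \<in> H" for p
      using that lap_u by (simp add: laplacian_add)
  qed
  then show "\<exists>w. is_harmonic_extension N g H Y Z y w"
    by blast
next
  fix w1 w2
  assume w1: "is_harmonic_extension N g H Y Z y w1" and w2: "is_harmonic_extension N g H Y Z y w2"
  have "(\<lambda>x. w1 x - w2 x) \<in> supported_on H"
  proof (unfold supported_on_def, intro CollectI allI impI)
    fix x assume "x \<notin> H"
    then show "w1 x - w2 x = 0"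
      using w1 w2 unfolding is_harmonic_extension_def by (cases "x \<in> Y"; cases "x \<in> Z") auto
  qed
  moreover have "laplacian N g (\<lambda>x. w1 x - w2 x) p = 0" if "p \<in> H" for p
    using w1 w2 that by (simp add: is_harmonic_extension_def laplacian_diff)
  ultimately have "w1 x - w2 x = 0" for x
    by (rule harmonic_eq_0)
  then show "w1 = w2"
    by (simp add: fun_eq_iff)
qed

lemma dirichlet_to_neumann_inj_on:
  assumes "H \<inter> Y = {}" and "Z \<inter> (H \<union> Y) = {}"
    and unique_continuation: "\<And>u. \<forall>x\<in>Z. u x = 0 \<Longrightarrow> \<forall>p\<in>H. laplacian N g u p = 0
      \<Longrightarrow> \<forall>b\<in>Z. g b (Q b) * (u (Q b) - u b) = 0 \<Longrightarrow> \<forall>x\<in>Y. u x = 0"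
  shows "inj_on (dirichlet_to_neumann N g Q H Y Z) (supported_on Y)"
proof (rule inj_onI)
  fix y1 y2
  assume y1: "y1 \<in> supported_on Y" and y2: "y2 \<in> supported_on Y"
    and eq: "dirichlet_to_neumann N g Q H Y Z y1 = dirichlet_to_neumann N g Q H Y Z y2"
  define w1 where "w1 = (THE w. is_harmonic_extension N g H Y Z y1 w)"
  define w2 where "w2 = (THE w. is_harmonic_extension N g H Y Z y2 w)"
  have w1: "is_harmonic_extension N g H Y Z y1 w1"
    unfolding w1_def using ex1_harmonic_extension[OF assms(1,2) y1] by (rule theI')
  have w2: "is_harmonic_extension N g H Y Z y2 w2"
    unfolding w2_def using ex1_harmonic_extension[OF assms(1,2) y2] by (rule theI')
  have "\<forall>x\<in>Y. w1 x - w2 x = 0"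
  proof (rule unique_continuation)
    show "\<forall>x\<in>Z. w1 x - w2 x = 0"
      using w1 w2 by (simp add: is_harmonic_extension_def)
    show "\<forall>p\<in>H. laplacian N g (\<lambda>x. w1 x - w2 x) p = 0"
      using w1 w2 by (simp add: is_harmonic_extension_def laplacian_diff)
    show "\<forall>b\<in>Z. g b (Q b) * (w1 (Q b) - w2 (Q b) - (w1 b - w2 b)) = 0"
    proof
      fix b assume "b \<in> Z"
      with fun_cong[OF eq, of b]
      have "g b (Q b) * (w1 (Q b) - w1 b) = g b (Q b) * (w2 (Q b) - w2 b)"
        by (simp add: dirichlet_to_neumann_def Let_def flip: w1_def w2_def)
      then show "g b (Q b) * (w1 (Q b) - w2 (Q b) - (w1 b - w2 b)) = 0"
        by (simp add: algebra_simps)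
    qed
  qed
  then show "y1 = y2"
    using w1 w2 y1 y2 by (auto simp: fun_eq_iff is_harmonic_extension_def supported_on_def)
qed

end

section \<open>The lattice box\<close>

lemma sum_list_list_update:
  fixes xs :: "'a::ab_group_add list"
  shows "i < length xs \<Longrightarrow> sum_list (xs[i := v]) = sum_list xs - xs ! i + v"
  by (induction xs arbitrary: i) (auto split: nat.split)

lemma ssum_list_update: "i < length x \<Longrightarrow> ssum (x[i := v]) = ssum x - x ! i + v"
  by (simp add: ssum_def sum_list_list_update)

definition sqnorm :: "int list \<Rightarrow> int" where
  "sqnorm x = sum_list (map (\<lambda>a. a\<^sup>2) x)"

lemma sqnorm_list_update: "i < length x \<Longrightarrow> sqnorm (x[i := v]) = sqnorm x - (x ! i)\<^sup>2 + v\<^sup>2"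
  by (simp add: sqnorm_def map_update sum_list_list_update)

lemma l1dist_nonneg: "0 \<le> l1dist p q"
  by (simp add: l1dist_def sum_nonneg)

lemma l1dist_commute: "length p = length q \<Longrightarrow> l1dist p q = l1dist q p"
  by (simp add: l1dist_def abs_minus_commute)

lemma l1dist_eq_0_iff:
  assumes "length p = length q"
  shows "l1dist p q = 0 \<longleftrightarrow> p = q"
proof
  assume "l1dist p q = 0"
  then have "\<forall>i\<in>{..<length p}. \<bar>p ! i - q ! i\<bar> = 0"
    unfolding l1dist_def by (subst sum_nonneg_eq_0_iff[symmetric]) auto
  then show "p = q"
    using assms by (auto intro: nth_equalityI)
qed (simp add: l1dist_def)

lemma l1dist_list_update: "i < length p \<Longrightarrow> l1dist p (p[i := v]) = \<bar>p ! i - v\<bar>"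
  unfolding l1dist_def by (simp add: nth_list_update if_distrib sum.If_cases Int_absorb1)

lemma l1dist_eq_1_imp_unit_step:
  assumes len: "length q = length p" and one: "l1dist p q = 1"
  obtains i where "i < length p" and "q = p[i := p ! i + 1] \<or> q = p[i := p ! i - 1]"
proof -
  define f where "f k = \<bar>p ! k - q ! k\<bar>" for k
  have sum_f: "(\<Sum>k<length p. f k) = 1"
    using one by (simp add: l1dist_def f_def)
  obtain i where i: "i < length p" and "f i \<noteq> 0"
    using sum_f by (metis (no_types, lifting) lessThan_iff sum.neutral zero_neq_one)
  have f_nonneg: "0 \<le> f k" for k
    by (simp add: f_def)
  have split: "(\<Sum>k<length p. f k) = f i + (\<Sum>k\<in>{..<length p} - {i}. f k)"
    using i by (simp add: sum.remove)
  have "0 \<le> (\<Sum>k\<in>{..<length p} - {i}. f k)"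
    by (simp add: f_nonneg sum_nonneg)
  with sum_f split \<open>f i \<noteq> 0\<close> f_nonneg[of i]
  have "f i = 1" and rest: "(\<Sum>k\<in>{..<length p} - {i}. f k) = 0"
    by linarith+
  from rest have "\<forall>k\<in>{..<length p} - {i}. f k = 0"
    by (simp add: sum_nonneg_eq_0_iff f_nonneg)
  then have "q = p[i := q ! i]"
    using len i by (intro nth_equalityI) (auto simp: f_def nth_list_update)
  moreover have "q ! i = p ! i + 1 \<or> q ! i = p ! i - 1"
    using \<open>f i = 1\<close> by (auto simp: f_def abs_if split: if_splits)
  ultimately show ?thesis
    using that i by metis
qed

lemma finite_Dom: "finite (Dom d n)"
proof (rule finite_subset)
  show "Dom d n \<subseteq> {xs. set xs \<subseteq> {1..int n} \<and> length xs = d}"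
    by (auto simp: Dom_def in_set_conv_nth)
qed (simp add: finite_lists_length_eq)

lemma length_if_in_Dom_Bd: "p \<in> Dom d n \<union> Bd d n \<Longrightarrow> length p = d"
  by (auto simp: Dom_def Bd_def)

lemma list_update_in_Dom_iff:
  assumes "p \<in> Dom d n" and "j < d"
  shows "p[j := v] \<in> Dom d n \<longleftrightarrow> 1 \<le> v \<and> v \<le> int n"
  using assms by (auto simp: Dom_def nth_list_update)

lemma Bd_iff:
  assumes "1 \<le> n"
  shows "p \<in> Bd d n \<longleftrightarrow> length p = d \<and> p \<notin> Dom d n \<and> (\<exists>q\<in>Dom d n. l1dist q p = 1)"
proof (cases "length p = d")
  case True
  let ?D = "(\<lambda>q. l1dist q p) ` Dom d n"
  have "finite ?D" and "?D \<noteq> {}"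
    using finite_Dom assms by (auto simp: Dom_def intro!: exI[of _ "replicate d 1"])
  have pos: "1 \<le> l1dist q p" if "q \<in> Dom d n" and "p \<notin> Dom d n" for q
    using that True l1dist_nonneg[of q p] l1dist_eq_0_iff[of q p]
    by (fastforce simp: Dom_def)
  show ?thesis
  proof
    assume "p \<in> Bd d n"
    then have min: "Min ?D = 1"
      by (simp add: Bd_def)
    have "p \<notin> Dom d n"
    proof
      assume "p \<in> Dom d n"
      then have "Min ?D \<le> 0"
        using \<open>finite ?D\<close> by (intro Min_le_iff[THEN iffD2]) (auto simp: l1dist_def intro!: bexI[of _ p])
      with min show False
        by simp
    qed
    moreover have "1 \<in> ?D"
      using Min_in[OF \<open>finite ?D\<close> \<open>?D \<noteq> {}\<close>] min by simp
    ultimately show "length p = d \<and> p \<notin> Dom d n \<and> (\<exists>q\<in>Dom d n. l1dist q p = 1)"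
      using True by auto
  next
    assume "length p = d \<and> p \<notin> Dom d n \<and> (\<exists>q\<in>Dom d n. l1dist q p = 1)"
    then have "Min ?D = 1"
      using pos \<open>finite ?D\<close> by (intro Min_eqI) auto
    then show "p \<in> Bd d n"
      using True by (simp add: Bd_def)
  qed
qed (simp add: Bd_def)

lemma not_in_Bd_if_in_Dom: "1 \<le> n \<Longrightarrow> p \<in> Dom d n \<Longrightarrow> p \<notin> Bd d n"
  by (simp add: Bd_iff)

lemma Nbr_Dom_iff:
  assumes "1 \<le> n" and p: "p \<in> Dom d n"
  shows "q \<in> Nbr d n p \<longleftrightarrow> (\<exists>j<d. q = p[j := p ! j + 1] \<or> q = p[j := p ! j - 1])"
proof
  assume "q \<in> Nbr d n p"
  then have "length q = length p" and "l1dist p q = 1"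
    using p length_if_in_Dom_Bd[of q d n] by (auto simp: Nbr_def Edge_def Dom_def)
  then obtain j where "j < length p" and "q = p[j := p ! j + 1] \<or> q = p[j := p ! j - 1]"
    by (rule l1dist_eq_1_imp_unit_step)
  then show "\<exists>j<d. q = p[j := p ! j + 1] \<or> q = p[j := p ! j - 1]"
    using p by (auto simp: Dom_def)
next
  assume "\<exists>j<d. q = p[j := p ! j + 1] \<or> q = p[j := p ! j - 1]"
  then obtain j where "j < d" and "q = p[j := p ! j + 1] \<or> q = p[j := p ! j - 1]"
    by blast
  moreover have "\<bar>p ! j - (p ! j + 1)\<bar> = 1" and "\<bar>p ! j - (p ! j - 1)\<bar> = 1"
    by simp_all
  ultimately obtain v where "\<bar>p ! j - v\<bar> = 1" and q: "q = p[j := v]"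
    by blast
  then have "l1dist p q = 1" and "l1dist q p = 1" and "length q = d"
    using p \<open>j < d\<close> l1dist_list_update[of j p v] l1dist_commute[of q p] by (auto simp: Dom_def)
  then have "q \<in> Dom d n \<union> Bd d n"
    using Bd_iff[OF \<open>1 \<le> n\<close>] p l1dist_commute by blast
  then show "q \<in> Nbr d n p"
    using p \<open>l1dist p q = 1\<close> not_in_Bd_if_in_Dom[OF \<open>1 \<le> n\<close> p] by (simp add: Nbr_def Edge_def)
qed

lemma finite_Nbr:
  assumes "1 \<le> n" and "p \<in> Dom d n"
  shows "finite (Nbr d n p)"
proof (rule finite_subset)
  show "Nbr d n p \<subseteq> (\<lambda>j. p[j := p ! j + 1]) ` {..<d} \<union> (\<lambda>j. p[j := p ! j - 1]) ` {..<d}"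
    using Nbr_Dom_iff[OF assms] by blast
qed simp

lemma boundary_point_list_update:
  assumes "1 \<le> n" and p: "p \<in> Dom d n" and "j < d"
    and v: "\<bar>p ! j - v\<bar> = 1" "v < 1 \<or> int n < v"
  shows "p[j := v] \<in> Bd d n" and "Edge d n (p[j := v]) p" and "qb d n (p[j := v]) = p"
proof -
  let ?b = "p[j := v]"
  have len: "length p = d" "length ?b = d"
    using p by (auto simp: Dom_def)
  have "?b \<notin> Dom d n"
    using list_update_in_Dom_iff[OF p \<open>j < d\<close>] v by auto
  moreover have "l1dist p ?b = 1"
    using l1dist_list_update[of j p v] len \<open>j < d\<close> v by simp
  moreover have "l1dist ?b p = 1"
    using calculation l1dist_commute[of p ?b] len by simp
  ultimately show "?b \<in> Bd d n"
    using Bd_iff[OF \<open>1 \<le> n\<close>] p len by blast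
  then show "Edge d n ?b p"
    using p \<open>l1dist ?b p = 1\<close> not_in_Bd_if_in_Dom[OF \<open>1 \<le> n\<close> p] by (simp add: Edge_def)
  show "qb d n ?b = p"
    unfolding qb_def
  proof (rule the_equality)
    show "p \<in> Dom d n \<and> l1dist p ?b = 1"
      using p \<open>l1dist p ?b = 1\<close> by simp
  next
    fix q assume q: "q \<in> Dom d n \<and> l1dist q ?b = 1"
    then have len_q: "length q = d"
      by (simp add: Dom_def)
    have "length ?b = length q" and "l1dist q ?b = 1"
      using len len_q q by simp_all
    then obtain k where "k < length q" and "?b = q[k := q ! k + 1] \<or> ?b = q[k := q ! k - 1]"
      by (rule l1dist_eq_1_imp_unit_step)
    then obtain e where "k < d" and b_eq: "?b = q[k := e]" and e: "\<bar>q ! k - e\<bar> = 1"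
      using len_q by auto
    have q_range: "1 \<le> q ! i \<and> q ! i \<le> int n" if "i < d" for i
      using q that by (simp add: Dom_def)
    have "k = j"
    proof (rule ccontr)
      assume "k \<noteq> j"
      then have "v = q ! j"
        using len(1) \<open>j < d\<close> b_eq nth_list_update_eq[of j p v] by simp
      then show False
        using q_range[OF \<open>j < d\<close>] v by simp
    qed
    then have "v = e"
      using len(1) len_q \<open>j < d\<close> b_eq nth_list_update_eq[of j p v] nth_list_update_eq[of j q e] by simp
    show "q = p"
    proof (rule nth_equalityI)
      show "length q = length p"
        using len len_q by simp
      fix i assume "i < length q"
      show "q ! i = p ! i"
      proof (cases "i = j")
        case True
        then show ?thesis
          using e \<open>k = j\<close> \<open>v = e\<close> v q_range[OF \<open>j < d\<close>] p \<open>j < d\<close> by (auto simp: Dom_def)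
      next
        case False
        then have "p[j := v] ! i = q[k := e] ! i"
          by (simp only: b_eq)
        then show ?thesis
          using False \<open>k = j\<close> by simp
      qed
    qed
  qed
qed

lemma JS_iff:
  "b \<in> JS d n t \<longleftrightarrow> b \<in> Bd d n \<and>
     (ssum b \<le> t \<and> Min (set b) = 0 \<or> ssum b \<le> t + 1 \<and> Max (set b) = int n + 1)"
  by (auto simp: JS_def KSminus_def KSplus_def Kminus_def Kplus_def)

lemma upper_face_in_JS_iff:
  assumes "1 \<le> n" and p: "p \<in> Dom d n" and "j < d" and "p ! j = int n"
  shows "p[j := int n + 1] \<in> JS d n t \<longleftrightarrow> ssum p \<le> t"
proof -
  let ?b = "p[j := int n + 1]"
  have "j < length p"
    using p \<open>j < d\<close> by (simp add: Dom_def)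
  have "\<forall>y\<in>set p. 1 \<le> y \<and> y \<le> int n"
    using p by (auto simp: Dom_def in_set_conv_nth)
  then have range: "\<forall>y\<in>set ?b. 1 \<le> y \<and> y \<le> int n + 1"
    using set_update_subset_insert[of p j "int n + 1"] by fastforce
  moreover have top: "int n + 1 \<in> set ?b"
    using \<open>j < length p\<close> by (simp add: set_update_memI)
  ultimately have "Max (set ?b) = int n + 1"
    by (intro Max_eqI) auto
  moreover have "Min (set ?b) \<noteq> 0"
    using range Min_in[of "set ?b"] top by fastforce
  moreover have "?b \<in> Bd d n"
    using boundary_point_list_update(1)[OF assms(1-3)] \<open>p ! j = int n\<close> by simp
  moreover have "ssum ?b = ssum p + 1"
    using \<open>j < length p\<close> \<open>p ! j = int n\<close> by (simp add: ssum_list_update)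
  ultimately show ?thesis
    by (simp add: JS_iff)
qed

lemma lower_face_in_JS_iff:
  assumes "1 \<le> n" and p: "p \<in> Dom d n" and "j < d" and "p ! j = 1"
  shows "p[j := 0] \<in> JS d n t \<longleftrightarrow> ssum p \<le> t + 1"
proof -
  let ?b = "p[j := 0]"
  have "j < length p"
    using p \<open>j < d\<close> by (simp add: Dom_def)
  have "\<forall>y\<in>set p. 1 \<le> y \<and> y \<le> int n"
    using p by (auto simp: Dom_def in_set_conv_nth)
  then have range: "\<forall>y\<in>set ?b. 0 \<le> y \<and> y \<le> int n"
    using set_update_subset_insert[of p j 0] by fastforce
  moreover have bottom: "0 \<in> set ?b"
    using \<open>j < length p\<close> by (simp add: set_update_memI)
  ultimately have "Min (set ?b) = 0"
    by (intro Min_eqI) auto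
  moreover have "Max (set ?b) \<noteq> int n + 1"
    using range Max_in[of "set ?b"] bottom by fastforce
  moreover have "?b \<in> Bd d n"
    using boundary_point_list_update(1)[OF assms(1-3)] \<open>p ! j = 1\<close> by simp
  moreover have "ssum ?b = ssum p - 1"
    using \<open>j < length p\<close> \<open>p ! j = 1\<close> by (simp add: ssum_list_update)
  ultimately show ?thesis
    by (auto simp: JS_iff)
qed

lemma Nbr_Dom_cases:
  assumes "1 \<le> n" and p: "p \<in> Dom d n" and "q \<in> Nbr d n p"
  obtains (up) j where "j < d" and "q \<in> Dom d n" and "q = p[j := p ! j + 1]"
    | (down) j where "j < d" and "q \<in> Dom d n" and "q = p[j := p ! j - 1]"
    | (upper_face) j where "j < d" and "p ! j = int n" and "q = p[j := int n + 1]"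
    | (lower_face) j where "j < d" and "p ! j = 1" and "q = p[j := 0]"
proof -
  obtain j where "j < d" and q: "q = p[j := p ! j + 1] \<or> q = p[j := p ! j - 1]"
    using Nbr_Dom_iff[OF \<open>1 \<le> n\<close> p] \<open>q \<in> Nbr d n p\<close> by blast
  have "1 \<le> p ! j" and "p ! j \<le> int n"
    using p \<open>j < d\<close> by (simp_all add: Dom_def)
  show ?thesis
  proof (cases "q \<in> Dom d n")
    case True
    from q show ?thesis
    proof
      assume "q = p[j := p ! j + 1]"
      with \<open>j < d\<close> True show ?thesis
        by (rule that(1))
    next
      assume "q = p[j := p ! j - 1]"
      with \<open>j < d\<close> True show ?thesis
        by (rule that(2))
    qed
  next
    case False
    from q show ?thesis
    proof
      assume q_up: "q = p[j := p ! j + 1]"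
      then have "p ! j = int n"
        using False list_update_in_Dom_iff[OF p \<open>j < d\<close>] \<open>1 \<le> p ! j\<close> \<open>p ! j \<le> int n\<close> by simp
      moreover from this have "q = p[j := int n + 1]"
        using q_up by simp
      ultimately show ?thesis
        using \<open>j < d\<close> by (intro that(3))
    next
      assume q_down: "q = p[j := p ! j - 1]"
      then have "p ! j = 1"
        using False list_update_in_Dom_iff[OF p \<open>j < d\<close>] \<open>1 \<le> p ! j\<close> \<open>p ! j \<le> int n\<close> by simp
      moreover from this have "q = p[j := 0]"
        using q_down by simp
      ultimately show ?thesis
        using \<open>j < d\<close> by (intro that(4))
    qed
  qed
qed

section \<open>Unique continuation across level sets of s\<close>

lemma raise_coordinate:
  assumes "1 \<le> n" and x: "x \<in> Dom d n" and "i < d" and "x ! i < int n"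
  shows "x[i := x ! i + 1] \<in> Dom d n" and "ssum (x[i := x ! i + 1]) = ssum x + 1"
    and "sqnorm (x[i := x ! i + 1]) = sqnorm x + 2 * x ! i + 1"
    and "x \<in> Nbr d n (x[i := x ! i + 1])"
proof -
  have "i < length x" and "1 \<le> x ! i"
    using x \<open>i < d\<close> by (auto simp: Dom_def)
  show p: "x[i := x ! i + 1] \<in> Dom d n"
    using list_update_in_Dom_iff[OF x \<open>i < d\<close>] \<open>1 \<le> x ! i\<close> \<open>x ! i < int n\<close> by simp
  show "ssum (x[i := x ! i + 1]) = ssum x + 1" and "sqnorm (x[i := x ! i + 1]) = sqnorm x + 2 * x ! i + 1"
    using \<open>i < length x\<close> by (simp_all add: ssum_list_update sqnorm_list_update power2_eq_square algebra_simps)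
  have "x = (x[i := x ! i + 1])[i := x[i := x ! i + 1] ! i - 1]"
    using \<open>i < length x\<close> by simp
  then show "x \<in> Nbr d n (x[i := x ! i + 1])"
    using Nbr_Dom_iff[OF \<open>1 \<le> n\<close> p] \<open>i < d\<close> by blast
qed

lemma Nbr_raise_max_coordinate_cases:
  assumes "1 \<le> n" and x: "x \<in> Dom d n" and "i < d"
    and i_max: "\<forall>j<d. x ! j \<le> x ! i" and "x ! i < int n"
    and p_def: "p = x[i := x ! i + 1]" and "q \<in> Nbr d n p" and "q \<noteq> x"
  obtains (interior) "q \<in> Dom d n" and "ssum x \<le> ssum q" and "sqnorm x < sqnorm q"
    | (upper_face) j where "j < d" and "p ! j = int n" and "q = p[j := int n + 1]"
    | (lower_face) j where "j < d" and "p ! j = 1" and "q = p[j := 0]"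
proof -
  note p = raise_coordinate[OF \<open>1 \<le> n\<close> x \<open>i < d\<close> \<open>x ! i < int n\<close>, folded p_def]
  have "length p = d" and "1 \<le> x ! i"
    using p(1) x \<open>i < d\<close> by (simp_all add: Dom_def)
  from \<open>1 \<le> n\<close> p(1) \<open>q \<in> Nbr d n p\<close> show ?thesis
  proof (cases rule: Nbr_Dom_cases)
    case (up j)
    have "1 \<le> p ! j"
      using p(1) \<open>j < d\<close> by (simp add: Dom_def)
    then have "sqnorm x < sqnorm q"
      using up \<open>length p = d\<close> p(3) \<open>1 \<le> x ! i\<close>
      by (simp add: sqnorm_list_update power2_eq_square algebra_simps)
    moreover have "ssum q = ssum x + 2"
      using up \<open>length p = d\<close> p(2) by (simp add: ssum_list_update)
    ultimately show ?thesis
      using that(1) up by simp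
  next
    case (down j)
    have "j \<noteq> i"
    proof
      assume "j = i"
      then have "q = x"
        using down x by (simp add: p_def Dom_def)
      with \<open>q \<noteq> x\<close> show False ..
    qed
    then have "p ! j = x ! j"
      by (simp add: p_def)
    then have "sqnorm x < sqnorm q"
      using down \<open>length p = d\<close> p(3) i_max[rule_format, OF \<open>j < d\<close>]
      by (simp add: sqnorm_list_update power2_eq_square algebra_simps)
    moreover have "ssum q = ssum x"
      using down \<open>length p = d\<close> p(2) by (simp add: ssum_list_update)
    ultimately show ?thesis
      using that(1) down by simp
  next
    case (upper_face j)
    then show ?thesis
      by (rule that(2))
  next
    case (lower_face j)
    then show ?thesis
      by (rule that(3))
  qed
qed

context
  fixes n d :: nat and \<gamma> :: "int list \<Rightarrow> int list \<Rightarrow> real" and w :: "int list \<Rightarrow> real" and k :: int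
  assumes n: "1 \<le> n" and d: "1 \<le> d" and \<gamma>: "conductivity d n \<gamma>"
    and harmonic: "\<And>p. p \<in> Dom d n \<Longrightarrow> k < ssum p \<Longrightarrow> laplacian (Nbr d n) \<gamma> w p = 0"
    and upper: "\<And>x j. x \<in> Dom d n \<Longrightarrow> j < d \<Longrightarrow> x ! j = int n \<Longrightarrow> k \<le> ssum x \<Longrightarrow>
      w (x[j := int n + 1]) = 0 \<and> \<gamma> (x[j := int n + 1]) x * (w x - w (x[j := int n + 1])) = 0"
    and lower: "\<And>x j. x \<in> Dom d n \<Longrightarrow> j < d \<Longrightarrow> x ! j = 1 \<Longrightarrow> k < ssum x \<Longrightarrow> w (x[j := 0]) = 0"
begin

lemma unique_continuation_step:
  assumes x: "x \<in> Dom d n" "k \<le> ssum x"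
    and vanish: "\<And>y. y \<in> Dom d n \<Longrightarrow> k \<le> ssum y \<Longrightarrow> sqnorm x < sqnorm y \<Longrightarrow> w y = 0"
  shows "w x = 0"
proof (cases "\<exists>i<d. x ! i = int n")
  case True
  then obtain i where "i < d" and "x ! i = int n"
    by blast
  let ?b = "x[i := int n + 1]"
  have "w ?b = 0" and flux: "\<gamma> ?b x * (w x - w ?b) = 0"
    using upper[OF x(1) \<open>i < d\<close> \<open>x ! i = int n\<close> x(2)] by blast+
  have "Edge d n ?b x"
    using boundary_point_list_update(2)[OF n x(1) \<open>i < d\<close>] \<open>x ! i = int n\<close> by simp
  then have "0 < \<gamma> ?b x"
    using \<gamma> unfolding conductivity_def by blast
  then show ?thesis
    using flux \<open>w ?b = 0\<close> by simp
next
  case False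
  then have below: "x ! j < int n" if "j < d" for j
    using x(1) that by (force simp: Dom_def)
  obtain i where "i < d" and i_max: "\<forall>j<d. x ! j \<le> x ! i"
    using finite_obtain_arg_max[of "{..<d}" "(!) x"] d by auto
  define p where "p = x[i := x ! i + 1]"
  note p = raise_coordinate[OF n x(1) \<open>i < d\<close> below[OF \<open>i < d\<close>], folded p_def]
  have "1 \<le> x ! i"
    using x(1) \<open>i < d\<close> by (simp add: Dom_def)
  then have "w p = 0"
    using vanish p(1-3) x(2) by simp
  have "w q = 0" if "q \<in> Nbr d n p" and "q \<noteq> x" for q
    using n x(1) \<open>i < d\<close> i_max below[OF \<open>i < d\<close>] p_def that
  proof (cases rule: Nbr_raise_max_coordinate_cases)
    case interior
    then show ?thesis
      using vanish[of q] x(2) by auto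
  next
    case (upper_face j)
    then show ?thesis
      using upper[of p j] p(1,2) x(2) by simp
  next
    case (lower_face j)
    then show ?thesis
      using lower[of p j] p(1,2) x(2) by simp
  qed
  with finite_Nbr[OF n p(1)] p(4) have "laplacian (Nbr d n) \<gamma> w p = \<gamma> p x * w x"
    using \<open>w p = 0\<close> by (rule laplacian_eq_single_neighbour)
  moreover have "laplacian (Nbr d n) \<gamma> w p = 0"
    using harmonic p(1,2) x(2) by simp
  moreover have "0 < \<gamma> p x"
    using \<gamma> p(4) unfolding conductivity_def Nbr_def by blast
  ultimately show ?thesis
    by simp
qed

lemma unique_continuation_upward:
  assumes "z \<in> Dom d n" and "k \<le> ssum z"
  shows "w z = 0"
proof (rule ccontr)
  assume "w z \<noteq> 0"
  define S where "S = {x \<in> Dom d n. k \<le> ssum x \<and> w x \<noteq> 0}"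
  have "finite S" and "S \<noteq> {}"
    using finite_Dom assms \<open>w z \<noteq> 0\<close> by (auto simp: S_def)
  then obtain x where "x \<in> S" and x_max: "\<And>y. y \<in> S \<Longrightarrow> sqnorm y \<le> sqnorm x"
    using finite_obtain_arg_max[of S sqnorm] by blast
  have "w x = 0"
  proof (rule unique_continuation_step)
    show "x \<in> Dom d n" and "k \<le> ssum x"
      using \<open>x \<in> S\<close> by (simp_all add: S_def)
    show "w y = 0" if "y \<in> Dom d n" and "k \<le> ssum y" and "sqnorm x < sqnorm y" for y
      using x_max[of y] that by (auto simp: S_def)
  qed
  with \<open>x \<in> S\<close> show False
    by (simp add: S_def)
qed

end

text \<open>
  The reflection x \<mapsto> (n+1) - x is an automorphism of the lattice graph that exchanges upper
  and lower faces and reverses s; it turns upward into downward unique continuation.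
\<close>

definition mirror :: "nat \<Rightarrow> int list \<Rightarrow> int list" where
  "mirror n = map (\<lambda>a. int n + 1 - a)"

lemma mirror_mirror [simp]: "mirror n (mirror n x) = x"
  by (induction x) (simp_all add: mirror_def)

lemma length_mirror [simp]: "length (mirror n x) = length x"
  by (simp add: mirror_def)

lemma nth_mirror [simp]: "i < length x \<Longrightarrow> mirror n x ! i = int n + 1 - x ! i"
  by (simp add: mirror_def)

lemma mirror_list_update [simp]: "mirror n (x[j := v]) = (mirror n x)[j := int n + 1 - v]"
  by (simp add: mirror_def map_update)

lemma inj_mirror: "inj (mirror n)"
  by (rule injI) (metis mirror_mirror)

lemma ssum_mirror: "ssum (mirror n x) = int (length x) * (int n + 1) - ssum x"
  by (simp add: ssum_def mirror_def sum_list_subtractf sum_list_triv)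

lemma mirror_in_Dom_iff [simp]: "mirror n x \<in> Dom d n \<longleftrightarrow> x \<in> Dom d n"
  by (auto simp: Dom_def)

lemma l1dist_mirror: "length p = length q \<Longrightarrow> l1dist (mirror n p) (mirror n q) = l1dist p q"
  unfolding l1dist_def by (auto simp: abs_minus_commute intro!: sum.cong)

lemma mirror_in_Bd_iff [simp]:
  assumes "1 \<le> n"
  shows "mirror n p \<in> Bd d n \<longleftrightarrow> p \<in> Bd d n"
proof -
  have mirror_Bd: "mirror n x \<in> Bd d n" if x: "x \<in> Bd d n" for x
  proof -
    obtain q where "length x = d" and "x \<notin> Dom d n" and q: "q \<in> Dom d n" and "l1dist q x = 1"
      using x by (auto simp: Bd_iff[OF assms])
    moreover have "l1dist (mirror n q) (mirror n x) = 1"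
      using q \<open>length x = d\<close> \<open>l1dist q x = 1\<close> by (simp add: l1dist_mirror Dom_def)
    ultimately show ?thesis
      by (auto simp: Bd_iff[OF assms] intro!: bexI[of _ "mirror n q"])
  qed
  show ?thesis
  proof
    assume "mirror n p \<in> Bd d n"
    then show "p \<in> Bd d n"
      using mirror_Bd[of "mirror n p"] by (simp only: mirror_mirror)
  qed (rule mirror_Bd)
qed

lemma Edge_mirror_iff [simp]:
  assumes "1 \<le> n"
  shows "Edge d n (mirror n p) (mirror n q) \<longleftrightarrow> Edge d n p q"
  unfolding Edge_def using assms length_if_in_Dom_Bd[of p d n] length_if_in_Dom_Bd[of q d n]
  by (auto simp: l1dist_mirror)

lemma mem_mirror_image_iff: "x \<in> mirror n ` S \<longleftrightarrow> mirror n x \<in> S"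
  by (auto intro: image_eqI[of _ _ "mirror n x"])

lemma Nbr_mirror:
  assumes "1 \<le> n"
  shows "Nbr d n (mirror n p) = mirror n ` Nbr d n p"
proof (rule set_eqI)
  fix q
  have "q \<in> Nbr d n (mirror n p) \<longleftrightarrow> Edge d n (mirror n p) (mirror n (mirror n q))"
    by (simp add: Nbr_def)
  also have "\<dots> \<longleftrightarrow> mirror n q \<in> Nbr d n p"
    using assms by (simp only: Edge_mirror_iff) (simp add: Nbr_def)
  finally show "q \<in> Nbr d n (mirror n p) \<longleftrightarrow> q \<in> mirror n ` Nbr d n p"
    by (simp add: mem_mirror_image_iff)
qed

lemma conductivity_mirror:
  assumes "1 \<le> n" and \<gamma>: "conductivity d n \<gamma>"
  shows "conductivity d n (\<lambda>p q. \<gamma> (mirror n p) (mirror n q))"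
proof (unfold conductivity_def, intro allI impI)
  fix p q assume "Edge d n p q"
  then have "Edge d n (mirror n p) (mirror n q)"
    using assms(1) by simp
  then show "0 < \<gamma> (mirror n p) (mirror n q) \<and> \<gamma> (mirror n p) (mirror n q) = \<gamma> (mirror n q) (mirror n p)"
    using \<gamma> unfolding conductivity_def by blast
qed

lemma laplacian_mirror:
  assumes "1 \<le> n"
  shows "laplacian (Nbr d n) (\<lambda>p q. \<gamma> (mirror n p) (mirror n q)) (\<lambda>x. w (mirror n x)) p
    = laplacian (Nbr d n) \<gamma> w (mirror n p)"
  unfolding laplacian_def Nbr_mirror[OF assms]
  by (simp add: sum.reindex inj_on_subset[OF inj_mirror])

lemma unique_continuation_downward:
  assumes "1 \<le> n" and "1 \<le> d" and \<gamma>: "conductivity d n \<gamma>"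
    and harmonic: "\<And>p. p \<in> Dom d n \<Longrightarrow> ssum p < k \<Longrightarrow> laplacian (Nbr d n) \<gamma> w p = 0"
    and lower: "\<And>x j. x \<in> Dom d n \<Longrightarrow> j < d \<Longrightarrow> x ! j = 1 \<Longrightarrow> ssum x \<le> k \<Longrightarrow>
      w (x[j := 0]) = 0 \<and> \<gamma> (x[j := 0]) x * (w x - w (x[j := 0])) = 0"
    and upper: "\<And>x j. x \<in> Dom d n \<Longrightarrow> j < d \<Longrightarrow> x ! j = int n \<Longrightarrow> ssum x < k \<Longrightarrow>
      w (x[j := int n + 1]) = 0"
    and "z \<in> Dom d n" and "ssum z \<le> k"
  shows "w z = 0"
proof -
  have ssum_mirror_Dom: "ssum (mirror n x) = int d * (int n + 1) - ssum x" if "x \<in> Dom d n" for x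
    using that by (simp add: ssum_mirror Dom_def)
  have "w (mirror n (mirror n z)) = 0"
  proof (rule unique_continuation_upward[where k = "int d * (int n + 1) - k"
        and \<gamma> = "\<lambda>p q. \<gamma> (mirror n p) (mirror n q)" and w = "\<lambda>x. w (mirror n x)"])
    show "conductivity d n (\<lambda>p q. \<gamma> (mirror n p) (mirror n q))"
      using conductivity_mirror[OF \<open>1 \<le> n\<close> \<gamma>] .
    show "laplacian (Nbr d n) (\<lambda>p q. \<gamma> (mirror n p) (mirror n q)) (\<lambda>x. w (mirror n x)) p = 0"
      if "p \<in> Dom d n" and "int d * (int n + 1) - k < ssum p" for p
      using that harmonic[of "mirror n p"] by (simp add: laplacian_mirror[OF \<open>1 \<le> n\<close>] ssum_mirror_Dom)
    show "w (mirror n (x[j := int n + 1])) = 0 \<and> \<gamma> (mirror n (x[j := int n + 1])) (mirror n x)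
        * (w (mirror n x) - w (mirror n (x[j := int n + 1]))) = 0"
      if "x \<in> Dom d n" and "j < d" and "x ! j = int n" and "int d * (int n + 1) - k \<le> ssum x" for x j
    proof -
      have m: "mirror n x \<in> Dom d n" "mirror n x ! j = 1" "ssum (mirror n x) \<le> k"
        using that by (simp_all add: ssum_mirror_Dom Dom_def)
      show ?thesis
        unfolding mirror_list_update diff_self by (rule lower[OF m(1) \<open>j < d\<close> m(2,3)])
    qed
    show "w (mirror n (x[j := 0])) = 0"
      if "x \<in> Dom d n" and "j < d" and "x ! j = 1" and "int d * (int n + 1) - k < ssum x" for x j
    proof -
      have m: "mirror n x \<in> Dom d n" "mirror n x ! j = int n" "ssum (mirror n x) < k"
        using that by (simp_all add: ssum_mirror_Dom Dom_def)
      show ?thesis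
        unfolding mirror_list_update diff_zero by (rule upper[OF m(1) \<open>j < d\<close> m(2,3)])
    qed
    show "mirror n z \<in> Dom d n" and "int d * (int n + 1) - k \<le> ssum (mirror n z)"
      using \<open>z \<in> Dom d n\<close> \<open>ssum z \<le> k\<close> by (simp_all add: ssum_mirror_Dom)
  qed fact+
  then show ?thesis
    by simp
qed

lemma escaping_network_lattice:
  assumes "1 \<le> n" and "1 \<le> d" and \<gamma>: "conductivity d n \<gamma>" and H: "H \<subseteq> Dom d n"
  shows "escaping_network H (Nbr d n) \<gamma> ssum" and "escaping_network H (Nbr d n) \<gamma> (\<lambda>x. - ssum x)"
proof -
  have "finite H"
    using H finite_Dom by (rule finite_subset)
  moreover have "finite (Nbr d n p)" if "p \<in> H" for p
    using finite_Nbr \<open>1 \<le> n\<close> H that by blast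
  moreover have "0 < \<gamma> p q" if "q \<in> Nbr d n p" for p q
    using \<gamma> that unfolding conductivity_def Nbr_def by blast
  moreover have "\<exists>q\<in>Nbr d n p. ssum p < ssum q" and "\<exists>q\<in>Nbr d n p. - ssum p < - ssum q"
    if "p \<in> H" for p
  proof -
    have p: "p \<in> Dom d n" and "0 < length p"
      using H that \<open>1 \<le> d\<close> by (auto simp: Dom_def)
    then have "ssum (p[0 := p ! 0 + 1]) = ssum p + 1" and "ssum (p[0 := p ! 0 - 1]) = ssum p - 1"
      by (simp_all add: ssum_list_update)
    moreover have "p[0 := p ! 0 + 1] \<in> Nbr d n p" and "p[0 := p ! 0 - 1] \<in> Nbr d n p"
      using Nbr_Dom_iff[OF \<open>1 \<le> n\<close> p] \<open>1 \<le> d\<close> by (simp_all add: Suc_le_eq; blast)+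
    ultimately show "\<exists>q\<in>Nbr d n p. ssum p < ssum q" and "\<exists>q\<in>Nbr d n p. - ssum p < - ssum q"
      by force+
  qed
  ultimately show "escaping_network H (Nbr d n) \<gamma> ssum"
    and "escaping_network H (Nbr d n) \<gamma> (\<lambda>x. - ssum x)"
    by unfold_locales blast+
qed

lemma T2_eq_dirichlet_to_neumann:
  "T2 d n \<gamma> t = dirichlet_to_neumann (Nbr d n) \<gamma> (qb d n)
     (Dom d n - LevS d n (t + 1)) (Lev d n (t + 1)) (Bd d n - JS d n t)"
proof -
  have "(Dom d n - LevS d n t) \<union> (Bd d n - JS d n t)
      = (Dom d n - LevS d n (t + 1)) \<union> Lev d n (t + 1) \<union> (Bd d n - JS d n t)"
    by (auto simp: LevS_def Lev_def)
  then show ?thesis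
    unfolding T2_def dirichlet_to_neumann_def is_harmonic_extension_def laplacian_def by simp
qed

lemma T2'_eq_dirichlet_to_neumann:
  "T2' d n \<gamma> t = dirichlet_to_neumann (Nbr d n) \<gamma> (qb d n)
     (LevS d n (t - 1)) (Lev d n t) (JS d n (t - 1))"
proof -
  have "LevS d n t \<union> JS d n (t - 1) = LevS d n (t - 1) \<union> Lev d n t \<union> JS d n (t - 1)"
    by (auto simp: LevS_def Lev_def)
  then show ?thesis
    unfolding T2'_def dirichlet_to_neumann_def is_harmonic_extension_def laplacian_def by simp
qed

lemma unique_continuation_for_T2:
  assumes "1 \<le> n" and "1 \<le> d" and "conductivity d n \<gamma>"
    and zero: "\<forall>x\<in>Bd d n - JS d n t. u x = 0"
    and harmonic: "\<forall>p\<in>Dom d n - LevS d n (t + 1). laplacian (Nbr d n) \<gamma> u p = 0"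
    and flux: "\<forall>b\<in>Bd d n - JS d n t. \<gamma> b (qb d n b) * (u (qb d n b) - u b) = 0"
    and z: "z \<in> Lev d n (t + 1)"
  shows "u z = 0"
proof (rule unique_continuation_upward[OF assms(1-3), where k = "t + 1" and w = u])
  show "laplacian (Nbr d n) \<gamma> u p = 0" if "p \<in> Dom d n" and "t + 1 < ssum p" for p
    using that harmonic by (simp add: LevS_def)
  show "u (x[j := int n + 1]) = 0 \<and> \<gamma> (x[j := int n + 1]) x * (u x - u (x[j := int n + 1])) = 0"
    if "x \<in> Dom d n" and "j < d" and "x ! j = int n" and "t + 1 \<le> ssum x" for x j
  proof -
    let ?b = "x[j := int n + 1]"
    have "?b \<in> Bd d n - JS d n t"
      using boundary_point_list_update(1)[OF \<open>1 \<le> n\<close> that(1,2), of "int n + 1"]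
        upper_face_in_JS_iff[OF \<open>1 \<le> n\<close> that(1-3), of t] that(3,4) by simp
    then have "u ?b = 0" and "\<gamma> ?b (qb d n ?b) * (u (qb d n ?b) - u ?b) = 0"
      using zero flux by blast+
    then show ?thesis
      using boundary_point_list_update(3)[OF \<open>1 \<le> n\<close> that(1,2), of "int n + 1"] that(3) by simp
  qed
  show "u (x[j := 0]) = 0" if "x \<in> Dom d n" and "j < d" and "x ! j = 1" and "t + 1 < ssum x" for x j
    using that zero boundary_point_list_update(1)[OF \<open>1 \<le> n\<close> that(1,2), of 0]
      lower_face_in_JS_iff[OF \<open>1 \<le> n\<close> that(1-3), of t] by simp
  show "z \<in> Dom d n" and "t + 1 \<le> ssum z"
    using z by (simp_all add: Lev_def)
qed

lemma unique_continuation_for_T2':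
  assumes "1 \<le> n" and "1 \<le> d" and "conductivity d n \<gamma>"
    and zero: "\<forall>x\<in>JS d n (t - 1). u x = 0"
    and harmonic: "\<forall>p\<in>LevS d n (t - 1). laplacian (Nbr d n) \<gamma> u p = 0"
    and flux: "\<forall>b\<in>JS d n (t - 1). \<gamma> b (qb d n b) * (u (qb d n b) - u b) = 0"
    and z: "z \<in> Lev d n t"
  shows "u z = 0"
proof (rule unique_continuation_downward[OF assms(1-3), where k = t and w = u])
  show "laplacian (Nbr d n) \<gamma> u p = 0" if "p \<in> Dom d n" and "ssum p < t" for p
    using that harmonic by (simp add: LevS_def)
  show "u (x[j := 0]) = 0 \<and> \<gamma> (x[j := 0]) x * (u x - u (x[j := 0])) = 0"
    if "x \<in> Dom d n" and "j < d" and "x ! j = 1" and "ssum x \<le> t" for x j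
  proof -
    let ?b = "x[j := 0]"
    have "?b \<in> JS d n (t - 1)"
      using lower_face_in_JS_iff[OF \<open>1 \<le> n\<close> that(1-3), of "t - 1"] that(4) by simp
    then have "u ?b = 0" and "\<gamma> ?b (qb d n ?b) * (u (qb d n ?b) - u ?b) = 0"
      using zero flux by blast+
    then show ?thesis
      using boundary_point_list_update(3)[OF \<open>1 \<le> n\<close> that(1,2), of 0] that(3) by simp
  qed
  show "u (x[j := int n + 1]) = 0" if "x \<in> Dom d n" and "j < d" and "x ! j = int n" and "ssum x < t" for x j
    using that zero upper_face_in_JS_iff[OF \<open>1 \<le> n\<close> that(1-3), of "t - 1"] by simp
  show "z \<in> Dom d n" and "ssum z \<le> t"
    using z by (simp_all add: Lev_def)
qed

lemma inj_on_T2: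
  assumes "1 \<le> n" and "1 \<le> d" and "conductivity d n \<gamma>"
  shows "inj_on (T2 d n \<gamma> t) (supported_on (Lev d n (t + 1)))"
proof -
  interpret escaping_network "Dom d n - LevS d n (t + 1)" "Nbr d n" \<gamma> ssum
    by (rule escaping_network_lattice(1)[OF assms]) blast
  show ?thesis
    unfolding T2_eq_dirichlet_to_neumann
  proof (rule dirichlet_to_neumann_inj_on)
    show "(Dom d n - LevS d n (t + 1)) \<inter> Lev d n (t + 1) = {}"
      by (auto simp: LevS_def Lev_def)
    show "(Bd d n - JS d n t) \<inter> (Dom d n - LevS d n (t + 1) \<union> Lev d n (t + 1)) = {}"
      using not_in_Bd_if_in_Dom[OF \<open>1 \<le> n\<close>] by (auto simp: Lev_def)
  qed (use unique_continuation_for_T2[OF assms] in blast)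
qed

lemma inj_on_T2':
  assumes "1 \<le> n" and "1 \<le> d" and "conductivity d n \<gamma>"
  shows "inj_on (T2' d n \<gamma> t) (supported_on (Lev d n t))"
proof -
  interpret escaping_network "LevS d n (t - 1)" "Nbr d n" \<gamma> "\<lambda>x. - ssum x"
    by (rule escaping_network_lattice(2)[OF assms]) (auto simp: LevS_def)
  show ?thesis
    unfolding T2'_eq_dirichlet_to_neumann
  proof (rule dirichlet_to_neumann_inj_on)
    show "LevS d n (t - 1) \<inter> Lev d n t = {}"
      by (auto simp: LevS_def Lev_def)
    show "JS d n (t - 1) \<inter> (LevS d n (t - 1) \<union> Lev d n t) = {}"
      using not_in_Bd_if_in_Dom[OF \<open>1 \<le> n\<close>] by (auto simp: LevS_def Lev_def JS_iff)
  qed (use unique_continuation_for_T2'[OF assms] in blast)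
qed

theorem proposition3p3:
  fixes d n :: nat and \<gamma> :: "int list \<Rightarrow> int list \<Rightarrow> real"
  assumes "d \<ge> 2" and "n \<ge> 1" and "conductivity d n \<gamma>"
  shows "(\<forall>t::int. int d - 1 \<le> t \<and> t \<le> int d * int n - 1 \<longrightarrow>
            inj_on (T2 d n \<gamma> t) {y. \<forall>z. z \<notin> Lev d n (t + 1) \<longrightarrow> y z = 0})
       \<and> (\<forall>t::int. int d \<le> t \<and> t \<le> int d * int n \<longrightarrow>
            inj_on (T2' d n \<gamma> t) {x. \<forall>z. z \<notin> Lev d n t \<longrightarrow> x z = 0})"
proof -
  \<comment> \<open>Injectivity holds for every t.\<close>
  have "1 \<le> n" and "1 \<le> d"
    using assms by simp_all
  then show ?thesis
    using inj_on_T2 inj_on_T2' assms(3) unfolding supported_on_def by blast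
qed

end
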